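(* Let $\mathcal A$ be an associative unital algebra and $a_0,\dots,a_n\in\mathcal A$ invertible ($n\ge1$). Then in the cyclic quotient of noncommutative differential forms, $$\{a_1,\dots,a_n\}+\sum_{i=0}^{n-1}(-1)^{i+1}\{a_0,\dots,a_{i-1},a_ia_{i+1},a_{i+2},\dots,a_n\}+(-1)^{n+1}\{a_0,\dots,a_{n-1}\}=0.$$ For example $\{a\}-\{ab\}+\{b\}=0$ and $\{b,c\}-\{ab,c\}+\{a,bc\}-\{a,b\}=0$.
   Context: Let $\Omega^\bullet\mathcal A$ be the noncommutative de Rham algebra of $\mathcal A$: the graded algebra generated by $\mathcal A$ in degree $0$ and symbols $da$ in degree $1$, with $d(ab)=da\,b+a\,db$, $d1=0$, extended to a differential $d$ with $d^2=0$ and the graded Leibniz rule. Its cyclic quotient is $\Omega^\bullet\mathcal A/[\Omega^\bullet\mathcal A,\Omega^\bullet\mathcal A]$ (graded commutators), so that $\omega_1\omega_2=(-1)^{|\omega_1||\omega_2|}\omega_2\omega_1$ there. For invertible $a_1,\dots,a_n$, $\{a_1,\dots,a_n\}$ denotes the class of $da_1\,da_2\cdots da_n\,a_n^{-1}\cdots a_1^{-1}$ (the noncommutative analogue of $d\log a_1\wedge\dots\wedge d\log a_n$). *)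

theory Defs
  imports Main
begin

text \<open>
The ground field is 'k; the unital associative k-algebra is the ring 'a
with scalar action sc.  Omega A is the quotient of the free (noncommutative,
unital) k-algebra on letters  Lt a  (a in A, degree 0) and  Dl a  (the symbol da, degree 1)
by the two-sided ideal generated by the defining relations.  Elements of the free
algebra are finitely supported functions  'a letter list => 'k ; a formal
combination is written as a list of (coefficient, word) pairs.
\<close>

datatype 'a letter = Lt 'a | Dl 'a

definition is_k_algebra :: "('k::field \<Rightarrow> 'a::ring_1 \<Rightarrow> 'a) \<Rightarrow> bool" where
  "is_k_algebra sc \<longleftrightarrow>
     (\<forall>c x y. sc c (x + y) = sc c x + sc c y) \<and>
     (\<forall>c e x. sc (c + e) x = sc c x + sc e x) \<and>
     (\<forall>c e x. sc (c * e) x = sc c (sc e x)) \<and>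
     (\<forall>x. sc 1 x = x) \<and>
     (\<forall>c x y. sc c (x * y) = sc c x * y) \<and>
     (\<forall>c x y. sc c (x * y) = x * sc c y)"

definition invertible_el :: "'a::ring_1 \<Rightarrow> bool" where
  "invertible_el a \<longleftrightarrow> (\<exists>b. a * b = 1 \<and> b * a = 1)"

definition inv_el :: "'a::ring_1 \<Rightarrow> 'a" where
  "inv_el a = (THE b. a * b = 1 \<and> b * a = 1)"

definition fm :: "('k::field \<times> 'g list) list \<Rightarrow> 'g list \<Rightarrow> 'k" where
  "fm xs = (\<lambda>w. sum_list (map (\<lambda>(c, v). if v = w then c else 0) xs))"

definition scale_comb :: "'k::field \<Rightarrow> ('k \<times> 'g list) list \<Rightarrow> ('k \<times> 'g list) list" where
  "scale_comb c xs = map (\<lambda>(e, w). (c * e, w)) xs"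

definition wdeg :: "'a letter list \<Rightarrow> nat" where
  "wdeg w = length (filter (\<lambda>l. case l of Dl _ \<Rightarrow> True | Lt _ \<Rightarrow> False) w)"

definition omega_rels :: "('k::field \<Rightarrow> 'a::ring_1 \<Rightarrow> 'a) \<Rightarrow> ('k \<times> 'a letter list) list set" where
  "omega_rels sc =
     {[(1, [Lt (a + b)]), (-1, [Lt a]), (-1, [Lt b])] | a b. True} \<union>
     {[(1, [Lt (sc c a)]), (-c, [Lt a])] | c a. True} \<union>
     {[(1, [Lt a, Lt b]), (-1, [Lt (a * b)])] | a b. True} \<union>
     {[(1, []), (-1, [Lt 1])]} \<union>
     {[(1, [Dl (a + b)]), (-1, [Dl a]), (-1, [Dl b])] | a b. True} \<union>
     {[(1, [Dl (sc c a)]), (-c, [Dl a])] | c a. True} \<union>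
     {[(1, [Dl (a * b)]), (-1, [Dl a, Lt b]), (-1, [Lt a, Dl b])] | a b. True} \<union>
     {[(1, [Dl 1])]}"

definition cyc_gens :: "('k::field \<Rightarrow> 'a::ring_1 \<Rightarrow> 'a) \<Rightarrow> ('a letter list \<Rightarrow> 'k) set" where
  "cyc_gens sc =
     {fm (map (\<lambda>(c, w). (c, u @ w @ v)) r) | r u v. r \<in> omega_rels sc} \<union>
     {fm [(1, w1 @ w2), (- ((-1) ^ (wdeg w1 * wdeg w2)), w2 @ w1)] | w1 w2. True}"

inductive_set kspan :: "('g \<Rightarrow> 'k::field) set \<Rightarrow> ('g \<Rightarrow> 'k) set" for S where
  zero: "(\<lambda>_. 0) \<in> kspan S"
| step: "x \<in> S \<Longrightarrow> y \<in> kspan S \<Longrightarrow> (\<lambda>w. c * x w + y w) \<in> kspan S"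

text \<open>A formal combination represents zero in the cyclic quotient
  Omega A / [Omega A, Omega A] iff its image in the free algebra lies in
  (relation ideal) + (graded commutators).\<close>
definition cyc_zero :: "('k::field \<Rightarrow> 'a::ring_1 \<Rightarrow> 'a) \<Rightarrow> ('k \<times> 'a letter list) list \<Rightarrow> bool" where
  "cyc_zero sc xs \<longleftrightarrow> fm xs \<in> kspan (cyc_gens sc)"

text \<open>The class  {a_1,...,a_n} = da_1 ... da_n a_n^{-1} ... a_1^{-1}.\<close>
definition dlog :: "'a::ring_1 list \<Rightarrow> ('k::field \<times> 'a letter list) list" where
  "dlog as = [(1, map Dl as @ map (\<lambda>a. Lt (inv_el a)) (rev as))]"

end

theory Submission
  imports Defs "HOL-Library.Function_Algebras"
begin

text \<open>
  Let Y_j be the word da_0 ... da_(j-1) a_j da_(j+1) ... da_n a_n^-1 ... a_0^-1, i.e. the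
  word of {a_0, ..., a_n} with da_j replaced by a_j (\<open>dlog_word_undiff a n j\<close> below).
  Rotating the degree-0 letter a_0 of Y_0 to the end and cancelling a_0^-1 a_0 gives
  {a_1, ..., a_n}; cancelling a_n a_n^-1 in Y_n gives {a_0, ..., a_(n-1)}; and since
  (a_i a_(i+1))^-1 = a_(i+1)^-1 a_i^-1, the Leibniz rule d(a_i a_(i+1)) = da_i a_(i+1) + a_i da_(i+1)
  turns the i-th merged term into Y_i + Y_(i+1). The alternating sum therefore telescopes to 0.
\<close>

lemma fm_Nil: "fm [] = 0"
  by (simp add: fm_def fun_eq_iff)

lemma fm_append: "fm (xs @ ys) = fm xs + fm ys"
  by (simp add: fm_def fun_eq_iff)

lemma fm_scale_comb: "fm (scale_comb c xs) = (\<lambda>w. c * fm xs w)"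
  by (induction xs) (auto simp: fm_def scale_comb_def fun_eq_iff distrib_left)

lemma fm_concat: "fm (concat xss) = sum_list (map fm xss)"
  by (induction xss) (simp_all add: fm_Nil fm_append)

lemma sum_list_fun_apply: "sum_list (map f xs) w = sum_list (map (\<lambda>i. f i w) xs)"
  by (induction xs) simp_all

lemma kspan_base: "x \<in> S \<Longrightarrow> x \<in> kspan S"
  using kspan.step[OF _ kspan.zero, of x S 1] by simp

lemma kspan_zero: "0 \<in> kspan S"
  unfolding zero_fun_def by (rule kspan.zero)

lemma kspan_add: "x \<in> kspan S \<Longrightarrow> y \<in> kspan S \<Longrightarrow> x + y \<in> kspan S"
proof (induction x rule: kspan.induct)
  case zero
  then show ?case by (simp add: zero_fun_def[symmetric])
next
  case (step x z c)
  show ?case using kspan.step[OF step.hyps(1) step.IH[OF step.prems], of c]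
    by (simp add: plus_fun_def add.assoc)
qed

lemma kspan_scale: "x \<in> kspan S \<Longrightarrow> (\<lambda>w. c * x w) \<in> kspan S"
proof (induction x rule: kspan.induct)
  case zero
  then show ?case using kspan.zero by simp
next
  case (step x y e)
  show ?case using kspan.step[OF step.hyps(1) step.IH, of "c * e"]
    by (simp add: distrib_left mult.assoc)
qed

lemma kspan_uminus: "x \<in> kspan S \<Longrightarrow> - x \<in> kspan S"
  using kspan_scale[of x S "-1"] by (simp add: fun_Compl_def)

definition span_cong :: "('g \<Rightarrow> 'k::field) set \<Rightarrow> ('g \<Rightarrow> 'k) \<Rightarrow> ('g \<Rightarrow> 'k) \<Rightarrow> bool" where
  "span_cong S f g \<longleftrightarrow> f - g \<in> kspan S"

lemma span_cong_refl: "span_cong S f f"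
  by (simp add: span_cong_def kspan_zero)

lemma span_cong_sym: "span_cong S f g \<Longrightarrow> span_cong S g f"
  unfolding span_cong_def by (metis kspan_uminus minus_diff_eq)

lemma span_cong_trans [trans]:
  assumes "span_cong S f g" "span_cong S g h"
  shows "span_cong S f h"
proof -
  have "f - h = (f - g) + (g - h)" by simp
  with assms show ?thesis unfolding span_cong_def by (metis kspan_add)
qed

lemma span_cong_add:
  assumes "span_cong S f g" "span_cong S f' g'"
  shows "span_cong S (f + f') (g + g')"
proof -
  have "(f + f') - (g + g') = (f - g) + (f' - g')" by simp
  with assms show ?thesis unfolding span_cong_def by (metis kspan_add)
qed

lemma span_cong_scale:
  "span_cong S f g \<Longrightarrow> span_cong S (\<lambda>w. c * f w) (\<lambda>w. c * g w)"
  unfolding span_cong_def using kspan_scale[of "f - g" S c]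
  by (simp add: right_diff_distrib fun_diff_def)

lemma span_cong_sum_list:
  "(\<And>i. i \<in> set xs \<Longrightarrow> span_cong S (f i) (g i)) \<Longrightarrow>
   span_cong S (sum_list (map f xs)) (sum_list (map g xs))"
  by (induction xs) (simp_all add: span_cong_refl span_cong_add)

lemma alternating_telescope:
  fixes y :: "nat \<Rightarrow> 'k::comm_ring_1"
  shows "y 0 + ((\<Sum>i\<leftarrow>[0..<n]. (-1) ^ (i + 1) * (y i + y (Suc i))) + (-1) ^ (n + 1) * y n) = 0"
  by (induction n) (simp_all add: algebra_simps)

lemma span_alternating_telescope:
  assumes "span_cong S f (y 0)"
    and "\<And>i. i < n \<Longrightarrow> span_cong S (g i) (y i + y (Suc i))"
    and "span_cong S h (y n)"
  shows "f + (sum_list (map (\<lambda>i w. (-1) ^ (i + 1) * g i w) [0..<n]) + (\<lambda>w. (-1) ^ (n + 1) * h w))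
         \<in> kspan S"
proof -
  let ?z = "y 0 + (sum_list (map (\<lambda>i w. (-1) ^ (i + 1) * (y i + y (Suc i)) w) [0..<n])
              + (\<lambda>w. (-1) ^ (n + 1) * y n w))"
  have "span_cong S (\<lambda>w. (-1) ^ (i + 1) * g i w) (\<lambda>w. (-1) ^ (i + 1) * (y i + y (Suc i)) w)"
    if "i < n" for i
    using span_cong_scale[OF assms(2)[OF that]] .
  then have "span_cong S
      (f + (sum_list (map (\<lambda>i w. (-1) ^ (i + 1) * g i w) [0..<n]) + (\<lambda>w. (-1) ^ (n + 1) * h w))) ?z"
    by (intro span_cong_add span_cong_sum_list assms(1) span_cong_scale[OF assms(3)]) simp
  moreover have "?z = 0"
  proof
    fix w
    show "?z w = 0 w"
      using alternating_telescope[of "\<lambda>i. y i w" n]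
      by (simp only: plus_fun_apply sum_list_fun_apply zero_fun_apply)
  qed
  ultimately show ?thesis
    by (simp add: span_cong_def)
qed

lemma inv_el_unique:
  fixes x b :: "'a::ring_1"
  assumes "x * b = 1" "b * x = 1"
  shows "inv_el x = b"
  unfolding inv_el_def
proof (rule the_equality)
  fix b' assume "x * b' = 1 \<and> b' * x = 1"
  then have "b' = b' * (x * b)" and "b' * x = 1" using assms(1) by simp_all
  then show "b' = b" by (metis mult.assoc mult_1_left)
qed (use assms in simp)

lemma invertible_el_inv_el:
  assumes "invertible_el x"
  shows "x * inv_el x = 1" "inv_el x * x = 1"
  using assms inv_el_unique unfolding invertible_el_def by metis+

lemma inv_el_mult:
  assumes "invertible_el x" "invertible_el y"
  shows "inv_el (x * y) = inv_el y * inv_el x"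
proof (rule inv_el_unique)
  have "x * y * (inv_el y * inv_el x) = x * (y * inv_el y) * inv_el x"
    and "inv_el y * inv_el x * (x * y) = inv_el y * (inv_el x * x) * y"
    by (simp_all add: mult.assoc)
  then show "x * y * (inv_el y * inv_el x) = 1" "inv_el y * inv_el x * (x * y) = 1"
    using invertible_el_inv_el[OF assms(1)] invertible_el_inv_el[OF assms(2)] by simp_all
qed

abbreviation cyc_cong :: "('k::field \<Rightarrow> 'a::ring_1 \<Rightarrow> 'a) \<Rightarrow> 'a letter list \<Rightarrow> 'a letter list \<Rightarrow> bool" where
  "cyc_cong sc w w' \<equiv> span_cong (cyc_gens sc) (fm [(1 :: 'k, w)]) (fm [(1, w')])"

lemma omega_rel_in_kspan:
  "r \<in> omega_rels sc \<Longrightarrow> fm (map (\<lambda>(c, w). (c, u @ w @ v)) r) \<in> kspan (cyc_gens sc)"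
  by (rule kspan_base) (auto simp: cyc_gens_def)

lemma cyc_cong_mult:
  fixes sc :: "'k::field \<Rightarrow> 'a::ring_1 \<Rightarrow> 'a"
  shows "cyc_cong sc (u @ [Lt x, Lt y] @ v) (u @ [Lt (x * y)] @ v)"
proof -
  let ?r = "[(1, [Lt x, Lt y]), (-1, [Lt (x * y)])] :: ('k \<times> 'a letter list) list"
  have "fm (map (\<lambda>(c, w). (c, u @ w @ v)) ?r)
      = fm [(1, u @ [Lt x, Lt y] @ v)] - fm [(1, u @ [Lt (x * y)] @ v)]"
    by (auto simp: fm_def fun_eq_iff)
  moreover have "fm (map (\<lambda>(c, w). (c, u @ w @ v)) ?r) \<in> kspan (cyc_gens sc)"
    by (rule omega_rel_in_kspan) (simp add: omega_rels_def)
  ultimately show ?thesis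
    unfolding span_cong_def by (simp only:)
qed

lemma cyc_cong_one:
  fixes sc :: "'k::field \<Rightarrow> 'a::ring_1 \<Rightarrow> 'a"
  shows "cyc_cong sc (u @ [Lt 1] @ v) (u @ v)"
proof -
  let ?r = "[(1, []), (-1, [Lt 1])] :: ('k \<times> 'a letter list) list"
  have "fm (map (\<lambda>(c, w). (c, u @ w @ v)) ?r)
      = fm [(1, u @ v)] - fm [(1, u @ [Lt 1] @ v)]"
    by (auto simp: fm_def fun_eq_iff)
  moreover have "fm (map (\<lambda>(c, w). (c, u @ w @ v)) ?r) \<in> kspan (cyc_gens sc)"
    by (rule omega_rel_in_kspan) (simp add: omega_rels_def)
  ultimately have "cyc_cong sc (u @ v) (u @ [Lt 1] @ v)"
    unfolding span_cong_def by (simp only:)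
  then show ?thesis
    by (rule span_cong_sym)
qed

lemma cyc_cong_leibniz:
  fixes sc :: "'k::field \<Rightarrow> 'a::ring_1 \<Rightarrow> 'a"
  shows "span_cong (cyc_gens sc) (fm [(1 :: 'k, u @ [Dl (x * y)] @ v)])
     (fm [(1, u @ [Dl x, Lt y] @ v)] + fm [(1, u @ [Lt x, Dl y] @ v)])"
proof -
  let ?r = "[(1, [Dl (x * y)]), (-1, [Dl x, Lt y]), (-1, [Lt x, Dl y])] :: ('k \<times> 'a letter list) list"
  have "fm (map (\<lambda>(c, w). (c, u @ w @ v)) ?r)
      = fm [(1, u @ [Dl (x * y)] @ v)] - (fm [(1, u @ [Dl x, Lt y] @ v)] + fm [(1, u @ [Lt x, Dl y] @ v)])"
    by (auto simp: fm_def fun_eq_iff)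
  moreover have "fm (map (\<lambda>(c, w). (c, u @ w @ v)) ?r) \<in> kspan (cyc_gens sc)"
    by (rule omega_rel_in_kspan) (simp add: omega_rels_def)
  ultimately show ?thesis
    unfolding span_cong_def by (simp only:)
qed

lemma cyc_cong_rotate:
  fixes sc :: "'k::field \<Rightarrow> 'a::ring_1 \<Rightarrow> 'a"
  assumes "wdeg w = 0"
  shows "cyc_cong sc (w @ w') (w' @ w)"
proof -
  have "fm [(1 :: 'k, w @ w'), (- ((-1) ^ (wdeg w * wdeg w')), w' @ w)]
      = fm [(1, w @ w')] - fm [(1, w' @ w)]"
    using assms by (auto simp: fm_def fun_eq_iff)
  moreover have "fm [(1 :: 'k, w @ w'), (- ((-1) ^ (wdeg w * wdeg w')), w' @ w)] \<in> kspan (cyc_gens sc)"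
    unfolding cyc_gens_def by (rule kspan_base) blast
  ultimately show ?thesis
    unfolding span_cong_def by (simp only:)
qed

lemma cyc_cong_cancel:
  fixes sc :: "'k::field \<Rightarrow> 'a::ring_1 \<Rightarrow> 'a"
  assumes "x * y = 1"
  shows "cyc_cong sc (u @ [Lt x, Lt y] @ v) (u @ v)"
proof -
  have "cyc_cong sc (u @ [Lt x, Lt y] @ v) (u @ [Lt (x * y)] @ v)"
    by (rule cyc_cong_mult)
  also have "cyc_cong sc (u @ [Lt (x * y)] @ v) (u @ v)"
    unfolding assms by (rule cyc_cong_one)
  finally show ?thesis .
qed

definition inv_word :: "'a::ring_1 list \<Rightarrow> 'a letter list" where
  "inv_word as = map (\<lambda>a. Lt (inv_el a)) (rev as)"

definition dlog_word :: "'a::ring_1 list \<Rightarrow> 'a letter list" where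
  "dlog_word as = map Dl as @ inv_word as"

lemma dlog_eq: "dlog as = [(1, dlog_word as)]"
  by (simp add: dlog_def dlog_word_def inv_word_def)

definition dlog_word_undiff :: "(nat \<Rightarrow> 'a::ring_1) \<Rightarrow> nat \<Rightarrow> nat \<Rightarrow> 'a letter list" where
  "dlog_word_undiff a n j =
     map Dl (map a [0..<j]) @ [Lt (a j)] @ map Dl (map a [j + 1..<n + 1]) @ inv_word (map a [0..<n + 1])"

lemma cyc_cong_dlog_word_undiff_first:
  fixes sc :: "'k::field \<Rightarrow> 'a::ring_1 \<Rightarrow> 'a"
  assumes "invertible_el (a 0)"
  shows "cyc_cong sc (dlog_word_undiff a n 0) (dlog_word (map a [1..<n + 1]))"
proof -
  let ?w = "dlog_word (map a [1..<n + 1])"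
  have undiff: "dlog_word_undiff a n 0 = [Lt (a 0)] @ (?w @ [Lt (inv_el (a 0))])"
    by (simp add: dlog_word_undiff_def dlog_word_def inv_word_def upt_conv_Cons del: upt_Suc)
  have "cyc_cong sc (dlog_word_undiff a n 0) ((?w @ [Lt (inv_el (a 0))]) @ [Lt (a 0)])"
    unfolding undiff by (rule cyc_cong_rotate) (simp add: wdeg_def)
  also have "cyc_cong sc ((?w @ [Lt (inv_el (a 0))]) @ [Lt (a 0)]) ?w"
    using cyc_cong_cancel[of "inv_el (a 0)" "a 0" sc ?w "[]"] invertible_el_inv_el(2)[OF assms]
    by simp
  finally show ?thesis .
qed

lemma cyc_cong_dlog_word_undiff_last:
  fixes sc :: "'k::field \<Rightarrow> 'a::ring_1 \<Rightarrow> 'a"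
  assumes "invertible_el (a n)"
  shows "cyc_cong sc (dlog_word_undiff a n n) (dlog_word (map a [0..<n]))"
proof -
  have "dlog_word_undiff a n n
      = map Dl (map a [0..<n]) @ [Lt (a n), Lt (inv_el (a n))] @ inv_word (map a [0..<n])"
    by (simp add: dlog_word_undiff_def inv_word_def)
  then show ?thesis
    unfolding dlog_word_def by (simp only:) (rule cyc_cong_cancel, rule invertible_el_inv_el(1)[OF assms])
qed

lemma cyc_cong_dlog_word_merge:
  fixes sc :: "'k::field \<Rightarrow> 'a::ring_1 \<Rightarrow> 'a"
  assumes "i < n" "invertible_el (a i)" "invertible_el (a (i + 1))"
  shows "span_cong (cyc_gens sc)
           (fm [(1 :: 'k, dlog_word (map a [0..<i] @ [a i * a (i + 1)] @ map a [i + 2..<n + 1]))])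
           (fm [(1, dlog_word_undiff a n i)] + fm [(1, dlog_word_undiff a n (i + 1))])"
proof -
  let ?P = "map Dl (map a [0..<i])"
  let ?Q = "map Dl (map a [i + 2..<n + 1]) @ inv_word (map a [i + 2..<n + 1])"
  let ?R = "inv_word (map a [0..<i])"
  let ?V = "map Dl (map a [i + 2..<n + 1]) @ inv_word (map a [0..<n + 1])"
  have upt_split: "[0..<n + 1] = [0..<i] @ [i, i + 1] @ [i + 2..<n + 1]"
    using assms(1) upt_add_eq_append[of 0 i "n + 1 - i"] by (simp add: upt_conv_Cons)
  have merged: "dlog_word (map a [0..<i] @ [a i * a (i + 1)] @ map a [i + 2..<n + 1])
      = (?P @ [Dl (a i * a (i + 1))] @ ?Q) @ [Lt (inv_el (a (i + 1)) * inv_el (a i))] @ ?R"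
    using inv_el_mult[OF assms(2,3)] by (simp add: dlog_word_def inv_word_def)
  have split: "(?P @ [Dl (a i * a (i + 1))] @ ?Q) @ [Lt (inv_el (a (i + 1))), Lt (inv_el (a i))] @ ?R
      = ?P @ [Dl (a i * a (i + 1))] @ ?V"
    unfolding upt_split by (simp add: inv_word_def)
  have undiff: "dlog_word_undiff a n i = ?P @ [Lt (a i), Dl (a (i + 1))] @ ?V"
    using assms(1) by (simp add: dlog_word_undiff_def upt_conv_Cons del: upt_Suc)
  have undiff_Suc: "dlog_word_undiff a n (i + 1) = ?P @ [Dl (a i), Lt (a (i + 1))] @ ?V"
    by (simp add: dlog_word_undiff_def)
  have "cyc_cong sc (dlog_word (map a [0..<i] @ [a i * a (i + 1)] @ map a [i + 2..<n + 1]))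
      (?P @ [Dl (a i * a (i + 1))] @ ?V)"
    unfolding merged split[symmetric] by (rule span_cong_sym, rule cyc_cong_mult)
  also have "span_cong (cyc_gens sc) (fm [(1, ?P @ [Dl (a i * a (i + 1))] @ ?V)])
      (fm [(1, dlog_word_undiff a n i)] + fm [(1, dlog_word_undiff a n (i + 1))])"
    unfolding undiff undiff_Suc using cyc_cong_leibniz[of sc ?P "a i" "a (i + 1)" ?V] by (simp only: add.commute)
  finally show ?thesis .
qed

theorem theorem4p7:
  fixes sc :: "'k::field \<Rightarrow> 'a::ring_1 \<Rightarrow> 'a"
    and a :: "nat \<Rightarrow> 'a"
    and n :: nat
  assumes alg: "is_k_algebra sc"
    and n1: "n \<ge> 1"
    and inv: "\<And>i. i \<le> n \<Longrightarrow> invertible_el (a i)"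
  shows "cyc_zero sc
           (dlog (map a [1..<n+1])
            @ concat (map (\<lambda>i. scale_comb ((-1) ^ (i + 1))
                  (dlog (map a [0..<i] @ [a i * a (i + 1)] @ map a [i + 2..<n + 1]))) [0..<n])
            @ scale_comb ((-1) ^ (n + 1)) (dlog (map a [0..<n])) :: ('k \<times> 'a letter list) list)"
  unfolding cyc_zero_def fm_append fm_concat map_map o_def fm_scale_comb
proof (rule span_alternating_telescope[where y = "\<lambda>j. fm [(1, dlog_word_undiff a n j)]"])
  show "span_cong (cyc_gens sc) (fm (dlog (map a [1..<n + 1]))) (fm [(1, dlog_word_undiff a n 0)])"
    unfolding dlog_eq by (rule span_cong_sym, rule cyc_cong_dlog_word_undiff_first) (simp add: inv)
  show "span_cong (cyc_gens sc) (fm (dlog (map a [0..<n]))) (fm [(1, dlog_word_undiff a n n)])"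
    unfolding dlog_eq by (rule span_cong_sym, rule cyc_cong_dlog_word_undiff_last) (simp add: inv)
  fix i assume "i < n"
  then show "span_cong (cyc_gens sc)
      (fm (dlog (map a [0..<i] @ [a i * a (i + 1)] @ map a [i + 2..<n + 1])))
      (fm [(1, dlog_word_undiff a n i)] + fm [(1, dlog_word_undiff a n (Suc i))])"
    unfolding dlog_eq using cyc_cong_dlog_word_merge[of i n a sc] inv by simp
qed

end
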